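(* Let $\mathbb{E}$ be a finitely complete category, $\Sigma$ a point-congruous class of split epimorphisms, and suppose $\mathbb{E}$ is a $\Sigma$-Mal'tsev category. Let reflexive graphs $(d_0,d_1\colon X_1\rightrightarrows X_0,s_0)$ and $(d_0',d_1'\colon X_1'\rightrightarrows X_0',s_0')$ be given, together with a split epimorphism of reflexive graphs, i.e. split epimorphisms $(g_1,t_1)\colon X_1\rightleftarrows X_1'$ and $(g_0,t_0)\colon X_0\rightleftarrows X_0'$ such that $g_1,g_0$ and $t_1,t_0$ each commute with $d_0$, $d_1$ and $s_0$. Suppose $(g_0,t_0)\in\Sigma$. If the square $g_0d_0=d_0'g_1$ is a pullback, then the square $g_0d_1=d_1'g_1$ is a pullback as well.
   Context: A split epimorphism is a pair $(f,s)$ with $fs=1$. A class $\Sigma$ of split epimorphisms is fibrational if it contains all split epimorphisms $(f,s)$ with $f$ invertible and is stable under pullback along any morphism; it is point-congruous if moreover the full subcategory $\Sigma(\mathbb{E})$ of the category $\mathrm{Pt}(\mathbb{E})$ of split epimorphisms (with commuting squares as morphisms) is closed under finite limits in $\mathrm{Pt}(\mathbb{E})$. A pair of morphisms with common codomain $Z$ is jointly extremally epic if it factors jointly through no non-invertible monomorphism into $Z$. $\mathbb{E}$ is $\Sigma$-Mal'tsev if for every split epimorphism $(f,s)\colon X\rightleftarrows Y$ in $\Sigma$ and every split epimorphism $(g,t)$ with $g\colon Y'\to Y$, letting $X'=Y'\times_YX$, $s'=(1_{Y'},sg)$, $\bar t=(tf,1_X)$, the pair $(s',\bar t)$ is jointly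 extremally epic. *)

theory Defs
  imports Main
begin

record ('o, 'a) category =
  Obj :: "'o set"
  Arr :: "'a set"
  Dom :: "'a \<Rightarrow> 'o"
  Cod :: "'a \<Rightarrow> 'o"
  Idt :: "'o \<Rightarrow> 'a"
  Comp :: "'a \<Rightarrow> 'a \<Rightarrow> 'a"   (* Comp C g f = g \<circ> f *)

definition hom :: "('o, 'a, 'm) category_scheme \<Rightarrow> 'a \<Rightarrow> 'o \<Rightarrow> 'o \<Rightarrow> bool" where
  "hom C f A B \<longleftrightarrow> f \<in> Arr C \<and> Dom C f = A \<and> Cod C f = B"

definition is_category :: "('o, 'a, 'm) category_scheme \<Rightarrow> bool" where
  "is_category C \<longleftrightarrow>
     (\<forall>f\<in>Arr C. Dom C f \<in> Obj C \<and> Cod C f \<in> Obj C) \<and>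
     (\<forall>A\<in>Obj C. hom C (Idt C A) A A) \<and>
     (\<forall>f g. f \<in> Arr C \<and> g \<in> Arr C \<and> Cod C f = Dom C g \<longrightarrow>
        hom C (Comp C g f) (Dom C f) (Cod C g)) \<and>
     (\<forall>f\<in>Arr C. Comp C (Idt C (Cod C f)) f = f \<and> Comp C f (Idt C (Dom C f)) = f) \<and>
     (\<forall>f g h. f \<in> Arr C \<and> g \<in> Arr C \<and> h \<in> Arr C \<and> Cod C f = Dom C g \<and> Cod C g = Dom C h
        \<longrightarrow> Comp C h (Comp C g f) = Comp C (Comp C h g) f)"

definition mono :: "('o, 'a, 'm) category_scheme \<Rightarrow> 'a \<Rightarrow> bool" where
  "mono C m \<longleftrightarrow> m \<in> Arr C \<and>
     (\<forall>x y. x \<in> Arr C \<and> y \<in> Arr C \<and> Dom C x = Dom C y \<and> Cod C x = Dom C m \<and> Cod C y = Dom C m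
        \<and> Comp C m x = Comp C m y \<longrightarrow> x = y)"

definition iso :: "('o, 'a, 'm) category_scheme \<Rightarrow> 'a \<Rightarrow> bool" where
  "iso C f \<longleftrightarrow> f \<in> Arr C \<and>
     (\<exists>g. hom C g (Cod C f) (Dom C f) \<and> Comp C g f = Idt C (Dom C f) \<and> Comp C f g = Idt C (Cod C f))"

definition split_epi :: "('o, 'a, 'm) category_scheme \<Rightarrow> 'a \<Rightarrow> 'a \<Rightarrow> bool" where
  "split_epi C f s \<longleftrightarrow> f \<in> Arr C \<and> hom C s (Cod C f) (Dom C f) \<and> Comp C f s = Idt C (Cod C f)"

definition is_pullback :: "('o, 'a, 'm) category_scheme \<Rightarrow> 'a \<Rightarrow> 'a \<Rightarrow> 'a \<Rightarrow> 'a \<Rightarrow> bool" where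
  "is_pullback C f g p q \<longleftrightarrow>
     f \<in> Arr C \<and> g \<in> Arr C \<and> p \<in> Arr C \<and> q \<in> Arr C \<and>
     Cod C f = Cod C g \<and> Cod C p = Dom C f \<and> Cod C q = Dom C g \<and> Dom C p = Dom C q \<and>
     Comp C f p = Comp C g q \<and>
     (\<forall>x y. x \<in> Arr C \<and> y \<in> Arr C \<and> Dom C x = Dom C y \<and> Cod C x = Dom C f \<and> Cod C y = Dom C g
        \<and> Comp C f x = Comp C g y \<longrightarrow>
        (\<exists>!u. hom C u (Dom C x) (Dom C p) \<and> Comp C p u = x \<and> Comp C q u = y))"

definition is_terminal :: "('o, 'a, 'm) category_scheme \<Rightarrow> 'o \<Rightarrow> bool" where
  "is_terminal C T \<longleftrightarrow> T \<in> Obj C \<and> (\<forall>A\<in>Obj C. \<exists>!u. hom C u A T)"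

text \<open>Finitely complete: terminal object and all pullbacks (equivalent to all finite limits).\<close>
definition finitely_complete :: "('o, 'a, 'm) category_scheme \<Rightarrow> bool" where
  "finitely_complete C \<longleftrightarrow> (\<exists>T. is_terminal C T) \<and>
     (\<forall>f g. f \<in> Arr C \<and> g \<in> Arr C \<and> Cod C f = Cod C g \<longrightarrow> (\<exists>p q. is_pullback C f g p q))"

text \<open>Objects: pairs (f,s) with f s = 1.  Arrows: (source, target, (a,b)) with
  a on the domain parts, b on the codomain parts, f' a = b f and a s = s' b.\<close>
definition Pt :: "('o, 'a, 'm) category_scheme \<Rightarrow>
    ('a \<times> 'a, ('a \<times> 'a) \<times> ('a \<times> 'a) \<times> ('a \<times> 'a)) category" where
  "Pt C = \<lparr> Obj = {(f, s). split_epi C f s},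
     Arr = {((f, s), (f', s'), (a, b)). split_epi C f s \<and> split_epi C f' s' \<and>
               hom C a (Dom C f) (Dom C f') \<and> hom C b (Cod C f) (Cod C f') \<and>
               Comp C f' a = Comp C b f \<and> Comp C a s = Comp C s' b},
     Dom = (\<lambda>(P, Q, _). P),
     Cod = (\<lambda>(P, Q, _). Q),
     Idt = (\<lambda>(f, s). ((f, s), (f, s), (Idt C (Dom C f), Idt C (Cod C f)))),
     Comp = (\<lambda>(Q', R, (a', b')) (P, Q, (a, b)). (P, R, (Comp C a' a, Comp C b' b))) \<rparr>"

definition fibrational :: "('o, 'a, 'm) category_scheme \<Rightarrow> ('a \<times> 'a) set \<Rightarrow> bool" where
  "fibrational C \<Sigma> \<longleftrightarrow>
     \<Sigma> \<subseteq> {(f, s). split_epi C f s} \<and>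
     (\<forall>f s. split_epi C f s \<and> iso C f \<longrightarrow> (f, s) \<in> \<Sigma>) \<and>
     (\<forall>f s g p q s'. (f, s) \<in> \<Sigma> \<and> is_pullback C f g p q \<and>
        hom C s' (Dom C g) (Dom C p) \<and> Comp C p s' = Comp C s g \<and> Comp C q s' = Idt C (Dom C g)
        \<longrightarrow> (q, s') \<in> \<Sigma>)"

text \<open>Closed under finite limits in Pt(E): contains the terminal objects of Pt(E) and
  every pullback in Pt(E) of a cospan of objects of \<Sigma>.\<close>
definition point_congruous :: "('o, 'a, 'm) category_scheme \<Rightarrow> ('a \<times> 'a) set \<Rightarrow> bool" where
  "point_congruous C \<Sigma> \<longleftrightarrow> fibrational C \<Sigma> \<and>
     (\<forall>T. is_terminal (Pt C) T \<longrightarrow> T \<in> \<Sigma>) \<and>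
     (\<forall>\<alpha> \<beta> \<pi> \<rho>. is_pullback (Pt C) \<alpha> \<beta> \<pi> \<rho> \<and>
        Dom (Pt C) \<alpha> \<in> \<Sigma> \<and> Dom (Pt C) \<beta> \<in> \<Sigma> \<and> Cod (Pt C) \<alpha> \<in> \<Sigma> \<longrightarrow> Dom (Pt C) \<pi> \<in> \<Sigma>)"

definition jointly_extremally_epic :: "('o, 'a, 'm) category_scheme \<Rightarrow> 'a \<Rightarrow> 'a \<Rightarrow> bool" where
  "jointly_extremally_epic C a b \<longleftrightarrow> a \<in> Arr C \<and> b \<in> Arr C \<and> Cod C a = Cod C b \<and>
     (\<forall>m a' b'. mono C m \<and> Cod C m = Cod C a \<and>
        hom C a' (Dom C a) (Dom C m) \<and> hom C b' (Dom C b) (Dom C m) \<and>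
        Comp C m a' = a \<and> Comp C m b' = b \<longrightarrow> iso C m)"

definition sigma_maltsev :: "('o, 'a, 'm) category_scheme \<Rightarrow> ('a \<times> 'a) set \<Rightarrow> bool" where
  "sigma_maltsev C \<Sigma> \<longleftrightarrow>
     (\<forall>f s g t p q s' tb. (f, s) \<in> \<Sigma> \<and> split_epi C g t \<and> Cod C g = Cod C f \<and>
        is_pullback C g f p q \<and>
        hom C s' (Dom C g) (Dom C p) \<and> Comp C p s' = Idt C (Dom C g) \<and> Comp C q s' = Comp C s g \<and>
        hom C tb (Dom C f) (Dom C p) \<and> Comp C p tb = Comp C t f \<and> Comp C q tb = Idt C (Dom C f)
        \<longrightarrow> jointly_extremally_epic C s' tb)"

definition reflexive_graph :: "('o, 'a, 'm) category_scheme \<Rightarrow> 'a \<Rightarrow> 'a \<Rightarrow> 'a \<Rightarrow> 'o \<Rightarrow> 'o \<Rightarrow> bool" where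
  "reflexive_graph C d0 d1 s0 X1 X0 \<longleftrightarrow>
     hom C d0 X1 X0 \<and> hom C d1 X1 X0 \<and> hom C s0 X0 X1 \<and>
     Comp C d0 s0 = Idt C X0 \<and> Comp C d1 s0 = Idt C X0"

end

theory Submission
  imports Defs
begin

text \<open>Let P be the pullback of g0 along d1' and \<phi> = (d1, g1) : X1 \<rightarrow> P the comparison map; the
  claim is that \<phi> is invertible. Since (g0, t0) \<in> \<Sigma>, the \<Sigma>-Mal'tsev property for this pullback
  makes \<phi> t1 and \<phi> s0 jointly extremally epic, so it suffices that \<phi> is monic, i.e. that the
  projections k1, k2 of its kernel pair K coincide. The kernel pair of the morphism of points
  (\<phi>, 1) : (g1, t1) \<rightarrow> (\<pi>1, \<phi> t1) is computed componentwise in Pt(E), so (g1 k1, sK) \<in> \<Sigma> by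
  point-congruity. A second application of the \<Sigma>-Mal'tsev property, to the pullback of the kernel
  pair of d0' along g1 k1, shows that d1 k1 = d1 k2 forces d0 k1 = d0 k2; as the d0-square is a
  pullback and g1 k1 = g1 k2, this gives k1 = k2.\<close>

lemma is_pullbackI:
  assumes "hom C f A Z" "hom C g B Z" "hom C p P A" "hom C q P B" "Comp C f p = Comp C g q"
    and "\<And>x y W. hom C x W A \<Longrightarrow> hom C y W B \<Longrightarrow> Comp C f x = Comp C g y \<Longrightarrow>
      \<exists>!u. hom C u W P \<and> Comp C p u = x \<and> Comp C q u = y"
  shows "is_pullback C f g p q"
proof -
  have universal: "\<forall>x y. x \<in> Arr C \<and> y \<in> Arr C \<and> Dom C x = Dom C y \<and> Cod C x = Dom C f \<and> Cod C y = Dom C g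
      \<and> Comp C f x = Comp C g y \<longrightarrow> (\<exists>!u. hom C u (Dom C x) (Dom C p) \<and> Comp C p u = x \<and> Comp C q u = y)"
  proof (intro allI impI)
    fix x y
    assume "x \<in> Arr C \<and> y \<in> Arr C \<and> Dom C x = Dom C y \<and> Cod C x = Dom C f \<and> Cod C y = Dom C g
      \<and> Comp C f x = Comp C g y"
    then have "hom C x (Dom C x) A" "hom C y (Dom C x) B" "Comp C f x = Comp C g y" "Dom C p = P"
      using assms(1-3) by (auto simp: hom_def)
    then show "\<exists>!u. hom C u (Dom C x) (Dom C p) \<and> Comp C p u = x \<and> Comp C q u = y"
      using assms(6) by simp
  qed
  then show ?thesis
    unfolding is_pullback_def by (intro conjI) (use universal assms(1-5) in \<open>simp_all add: hom_def\<close>)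
qed

locale cat =
  fixes C :: "('o, 'a, 'm) category_scheme"
  assumes is_category: "is_category C"
begin

lemma hom_objs:
  assumes "hom C f A B"
  shows "A \<in> Obj C" and "B \<in> Obj C"
  using assms is_category unfolding is_category_def hom_def by auto

lemma hom_comp: "hom C f A B \<Longrightarrow> hom C g B D \<Longrightarrow> hom C (Comp C g f) A D"
  using is_category unfolding is_category_def hom_def by metis

lemma hom_id: "A \<in> Obj C \<Longrightarrow> hom C (Idt C A) A A"
  using is_category unfolding is_category_def by blast

lemma Comp_id_left: "hom C f A B \<Longrightarrow> Comp C (Idt C B) f = f"
  using is_category unfolding is_category_def hom_def by metis

lemma Comp_id_right: "hom C f A B \<Longrightarrow> Comp C f (Idt C A) = f"
  using is_category unfolding is_category_def hom_def by metis

lemma Comp_assoc: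
  "hom C f A B \<Longrightarrow> hom C g B D \<Longrightarrow> hom C h D E \<Longrightarrow>
   Comp C (Comp C h g) f = Comp C h (Comp C g f)"
  using is_category unfolding is_category_def hom_def by metis

(* Arrow-level forms of the laws: once the hom facts at hand are unfolded by hom_def, the
   simplifier discharges their side conditions. *)

lemma Comp_arr: "f \<in> Arr C \<Longrightarrow> g \<in> Arr C \<Longrightarrow> Cod C f = Dom C g \<Longrightarrow> Comp C g f \<in> Arr C"
  and Dom_Comp: "f \<in> Arr C \<Longrightarrow> g \<in> Arr C \<Longrightarrow> Cod C f = Dom C g \<Longrightarrow> Dom C (Comp C g f) = Dom C f"
  and Cod_Comp: "f \<in> Arr C \<Longrightarrow> g \<in> Arr C \<Longrightarrow> Cod C f = Dom C g \<Longrightarrow> Cod C (Comp C g f) = Cod C g"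
  using hom_comp[of f "Dom C f" "Cod C f" g "Cod C g"] by (simp_all add: hom_def)

lemma Comp_assoc_arr:
  "f \<in> Arr C \<Longrightarrow> g \<in> Arr C \<Longrightarrow> h \<in> Arr C \<Longrightarrow> Cod C f = Dom C g \<Longrightarrow> Cod C g = Dom C h \<Longrightarrow>
   Comp C (Comp C h g) f = Comp C h (Comp C g f)"
  using Comp_assoc[of f "Dom C f" "Cod C f" g "Cod C g" h "Cod C h"] by (simp add: hom_def)

lemma Comp_id_left_arr: "f \<in> Arr C \<Longrightarrow> Cod C f = B \<Longrightarrow> Comp C (Idt C B) f = f"
  and Comp_id_right_arr: "f \<in> Arr C \<Longrightarrow> Dom C f = A \<Longrightarrow> Comp C f (Idt C A) = f"
  using Comp_id_left[of f "Dom C f" "Cod C f"] Comp_id_right[of f "Dom C f" "Cod C f"]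
  by (simp_all add: hom_def)

lemmas Comp_simps = Comp_arr Dom_Comp Cod_Comp Comp_assoc_arr Comp_id_left_arr Comp_id_right_arr

lemma Comp_assoc_subst:
  "Comp C g f = h \<Longrightarrow> x \<in> Arr C \<Longrightarrow> f \<in> Arr C \<Longrightarrow> g \<in> Arr C \<Longrightarrow>
   Cod C x = Dom C f \<Longrightarrow> Cod C f = Dom C g \<Longrightarrow> Comp C g (Comp C f x) = Comp C h x"
  by (metis Comp_assoc_arr)

definition pullback_square :: "'a \<Rightarrow> 'a \<Rightarrow> 'a \<Rightarrow> 'a \<Rightarrow> 'o \<Rightarrow> 'o \<Rightarrow> 'o \<Rightarrow> 'o \<Rightarrow> bool" where
  "pullback_square f g p q A B Z P \<longleftrightarrow>
     is_pullback C f g p q \<and> hom C f A Z \<and> hom C g B Z \<and> hom C p P A \<and> hom C q P B"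

lemma pullback_squareI:
  assumes "is_pullback C f g p q" "hom C f A Z" "hom C g B Z"
  shows "pullback_square f g p q A B Z (Dom C p)"
proof -
  have "p \<in> Arr C" "q \<in> Arr C" "Cod C p = Dom C f" "Cod C q = Dom C g" "Dom C q = Dom C p"
    using assms(1) unfolding is_pullback_def by auto
  then show ?thesis
    using assms unfolding pullback_square_def hom_def by auto
qed

lemma pullback_square_homs:
  assumes "pullback_square f g p q A B Z P"
  shows "hom C f A Z" "hom C g B Z" "hom C p P A" "hom C q P B"
  using assms by (auto simp: pullback_square_def)

lemma pullback_square_commutes: "pullback_square f g p q A B Z P \<Longrightarrow> Comp C f p = Comp C g q"
  by (simp add: pullback_square_def is_pullback_def)

lemma pullback_square_universal:
  assumes "pullback_square f g p q A B Z P" "hom C x W A" "hom C y W B" "Comp C f x = Comp C g y"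
  shows "\<exists>!u. hom C u W P \<and> Comp C p u = x \<and> Comp C q u = y"
proof -
  have homs: "hom C f A Z" "hom C g B Z" "hom C p P A" "hom C q P B"
    using pullback_square_homs[OF assms(1)] .
  have universal: "\<forall>x y. x \<in> Arr C \<and> y \<in> Arr C \<and> Dom C x = Dom C y \<and> Cod C x = Dom C f \<and> Cod C y = Dom C g
      \<and> Comp C f x = Comp C g y \<longrightarrow> (\<exists>!u. hom C u (Dom C x) (Dom C p) \<and> Comp C p u = x \<and> Comp C q u = y)"
    using assms(1) unfolding pullback_square_def is_pullback_def by blast
  have "x \<in> Arr C \<and> y \<in> Arr C \<and> Dom C x = Dom C y \<and> Cod C x = Dom C f \<and> Cod C y = Dom C g
      \<and> Comp C f x = Comp C g y"
    using assms(2-4) homs by (simp add: hom_def)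
  from universal[rule_format, OF this] show ?thesis
    using assms(2) homs by (simp add: hom_def)
qed

lemma pullback_square_lift:
  assumes "pullback_square f g p q A B Z P" "hom C x W A" "hom C y W B" "Comp C f x = Comp C g y"
  obtains u where "hom C u W P" "Comp C p u = x" "Comp C q u = y"
  using pullback_square_universal[OF assms] by blast

lemma pullback_square_unique:
  assumes pb: "pullback_square f g p q A B Z P" and u: "hom C u W P" and v: "hom C v W P"
    and "Comp C p u = Comp C p v" "Comp C q u = Comp C q v"
  shows "u = v"
proof -
  have homs: "hom C f A Z" "hom C g B Z" "hom C p P A" "hom C q P B"
    using pullback_square_homs[OF pb] .
  have "Comp C f (Comp C p u) = Comp C g (Comp C q u)"
    using Comp_assoc[OF u homs(3,1)] Comp_assoc[OF u homs(4,2)] pullback_square_commutes[OF pb]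
    by simp
  from pullback_square_universal[OF pb hom_comp[OF u homs(3)] hom_comp[OF u homs(4)] this]
  show ?thesis
    using assms by auto
qed

lemma pullback_square_sym:
  assumes "pullback_square f g p q A B Z P"
  shows "pullback_square g f q p B A Z P"
proof -
  have "is_pullback C f g p q"
    using assms by (simp add: pullback_square_def)
  then have "is_pullback C g f q p"
    unfolding is_pullback_def by (metis (no_types, lifting))
  then show ?thesis
    using assms by (simp add: pullback_square_def)
qed

lemma pullback_square_exists:
  assumes "finitely_complete C" "hom C f A Z" "hom C g B Z"
  obtains P p q where "pullback_square f g p q A B Z P"
  using assms pullback_squareI unfolding finitely_complete_def hom_def by metis

lemma monoI:
  assumes "hom C m A B" "\<And>x y V. hom C x V A \<Longrightarrow> hom C y V A \<Longrightarrow> Comp C m x = Comp C m y \<Longrightarrow> x = y"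
  shows "mono C m"
  unfolding mono_def
proof (intro conjI allI impI)
  show "m \<in> Arr C"
    using assms(1) by (simp add: hom_def)
  fix x y
  assume "x \<in> Arr C \<and> y \<in> Arr C \<and> Dom C x = Dom C y \<and> Cod C x = Dom C m \<and> Cod C y = Dom C m
    \<and> Comp C m x = Comp C m y"
  then show "x = y"
    using assms(1) by (intro assms(2)[of x "Dom C x" y]) (auto simp: hom_def)
qed

lemma monoD:
  assumes "mono C m" "hom C m A B" "hom C x V A" "hom C y V A" "Comp C m x = Comp C m y"
  shows "x = y"
proof -
  have "\<forall>x y. x \<in> Arr C \<and> y \<in> Arr C \<and> Dom C x = Dom C y \<and> Cod C x = Dom C m \<and> Cod C y = Dom C m
      \<and> Comp C m x = Comp C m y \<longrightarrow> x = y"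
    using assms(1) unfolding mono_def by blast
  then show ?thesis
    using assms(2-) unfolding hom_def by simp
qed

lemma isoE:
  assumes "iso C m" "hom C m A B"
  obtains m' where "hom C m' B A" "Comp C m' m = Idt C A" "Comp C m m' = Idt C B"
  using assms unfolding iso_def hom_def by auto

lemma mono_if_retraction:
  assumes m: "hom C m A B" and r: "hom C r B A" and rm: "Comp C r m = Idt C A"
  shows "mono C m"
proof (rule monoI[OF m])
  fix x y V assume x: "hom C x V A" and y: "hom C y V A" and mxy: "Comp C m x = Comp C m y"
  have "Comp C (Comp C r m) x = Comp C (Comp C r m) y"
    using Comp_assoc[OF x m r] Comp_assoc[OF y m r] mxy by simp
  then show "x = y"
    using rm Comp_id_left[OF x] Comp_id_left[OF y] by simp
qed

lemma pullback_square_mono: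
  assumes pb: "pullback_square f g p q A B Z P" and "mono C g"
  shows "mono C p"
proof (rule monoI)
  note homs = pullback_square_homs[OF pb]
  show "hom C p P A"
    by (fact homs(3))
  fix x y V assume x: "hom C x V P" and y: "hom C y V P" and pxy: "Comp C p x = Comp C p y"
  have "Comp C g (Comp C q x) = Comp C g (Comp C q y)"
    using Comp_assoc[OF x homs(3,1)] Comp_assoc[OF y homs(3,1)] Comp_assoc[OF x homs(4,2)]
      Comp_assoc[OF y homs(4,2)] pullback_square_commutes[OF pb] pxy by simp
  then have "Comp C q x = Comp C q y"
    using monoD[OF \<open>mono C g\<close> homs(2) hom_comp[OF x homs(4)] hom_comp[OF y homs(4)]] by blast
  then show "x = y"
    using pullback_square_unique[OF pb x y pxy] by blast
qed

lemma mono_if_kernel_pair_projections_eq: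
  assumes K: "pullback_square \<phi> \<phi> k1 k2 X X P K" and "k1 = k2"
  shows "mono C \<phi>"
proof (rule monoI)
  show "hom C \<phi> X P"
    using pullback_square_homs[OF K] by blast
  fix x y V assume "hom C x V X" "hom C y V X" "Comp C \<phi> x = Comp C \<phi> y"
  then obtain u where "Comp C k1 u = x" "Comp C k2 u = y"
    by (rule pullback_square_lift[OF K])
  then show "x = y"
    using \<open>k1 = k2\<close> by simp
qed

lemma kernel_pair_diagonal:
  assumes K: "pullback_square f f k1 k2 A A Z K"
  obtains \<delta> where "hom C \<delta> A K" "Comp C k1 \<delta> = Idt C A" "Comp C k2 \<delta> = Idt C A"
proof -
  have A: "A \<in> Obj C"
    using hom_objs(1)[OF pullback_square_homs(1)[OF K]] .
  show thesis
    by (rule pullback_square_lift[OF K hom_id[OF A] hom_id[OF A] refl]) (rule that)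
qed

lemma terminal_map_exists:
  assumes "finitely_complete C" "Y \<in> Obj C"
  obtains T t where "hom C t Y T" "\<forall>x y V. hom C x V Y \<and> hom C y V Y \<longrightarrow> Comp C t x = Comp C t y"
proof -
  obtain T where T: "is_terminal C T"
    using assms(1) unfolding finitely_complete_def by blast
  obtain t where t: "hom C t Y T"
    using T assms(2) unfolding is_terminal_def by blast
  have "Comp C t x = Comp C t y" if "hom C x V Y" "hom C y V Y" for x y V
  proof -
    have "\<exists>!u. hom C u V T"
      using T hom_objs(1)[OF that(1)] unfolding is_terminal_def by blast
    then show ?thesis
      using hom_comp[OF that(1) t] hom_comp[OF that(2) t] by blast
  qed
  then show thesis
    using t by (intro that) auto
qed

lemma equalizer_exists:
  assumes fc: "finitely_complete C" and e1: "hom C e1 X Y" and e2: "hom C e2 X Y"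
  obtains M m where "hom C m M X" "mono C m" "Comp C e1 m = Comp C e2 m"
    "\<forall>z V. hom C z V X \<and> Comp C e1 z = Comp C e2 z \<longrightarrow> (\<exists>u. hom C u V M \<and> Comp C m u = z)"
proof -
  have Y: "Y \<in> Obj C"
    using hom_objs(2)[OF e1] .
  obtain T t where t: "hom C t Y T" and t_const: "\<forall>x y V. hom C x V Y \<and> hom C y V Y \<longrightarrow> Comp C t x = Comp C t y"
    by (rule terminal_map_exists[OF fc Y])
  \<comment> \<open>R = Y \<times> Y, and M is the pullback of (e1, e2) : X \<rightarrow> R along the diagonal.\<close>
  obtain R r1 r2 where R: "pullback_square t t r1 r2 Y Y T R"
    using pullback_square_exists[OF fc t t] .
  have r: "hom C r1 R Y" "hom C r2 R Y"
    using pullback_square_homs[OF R] by auto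
  obtain \<Delta> where \<Delta>: "hom C \<Delta> Y R" "Comp C r1 \<Delta> = Idt C Y" "Comp C r2 \<Delta> = Idt C Y"
    using kernel_pair_diagonal[OF R] by blast
  have "Comp C t e1 = Comp C t e2"
    using t_const e1 e2 by blast
  then obtain e where e: "hom C e X R" "Comp C r1 e = e1" "Comp C r2 e = e2"
    by (rule pullback_square_lift[OF R e1 e2])
  obtain M m n where M: "pullback_square e \<Delta> m n X Y R M"
    using pullback_square_exists[OF fc e(1) \<Delta>(1)] .
  have m: "hom C m M X" and n: "hom C n M Y" and em: "Comp C e m = Comp C \<Delta> n"
    using pullback_square_homs[OF M] pullback_square_commutes[OF M] by auto
  have e1m: "Comp C e1 m = n"
    using e(1) m n \<Delta> r em by (simp add: Comp_simps hom_def Comp_assoc_subst[OF \<Delta>(2)] flip: e(2))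
  have e2m: "Comp C e2 m = n"
    using e(1) m n \<Delta> r em by (simp add: Comp_simps hom_def Comp_assoc_subst[OF \<Delta>(3)] flip: e(3))
  have "mono C m"
    using pullback_square_mono[OF M mono_if_retraction[OF \<Delta>(1) r(1) \<Delta>(2)]] .
  moreover have "\<exists>u. hom C u V M \<and> Comp C m u = z"
    if z: "hom C z V X" and ez: "Comp C e1 z = Comp C e2 z" for z V
  proof -
    have "Comp C e z = Comp C \<Delta> (Comp C e1 z)"
    proof (rule pullback_square_unique[OF R hom_comp[OF z e(1)] hom_comp[OF hom_comp[OF z e1] \<Delta>(1)]])
      show "Comp C r1 (Comp C e z) = Comp C r1 (Comp C \<Delta> (Comp C e1 z))"
        using z e e1 \<Delta> r by (simp add: Comp_simps hom_def Comp_assoc_subst[OF e(2)] Comp_assoc_subst[OF \<Delta>(2)])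
      show "Comp C r2 (Comp C e z) = Comp C r2 (Comp C \<Delta> (Comp C e1 z))"
        using z e e1 e2 \<Delta> r ez by (simp add: Comp_simps hom_def Comp_assoc_subst[OF e(3)] Comp_assoc_subst[OF \<Delta>(3)])
    qed
    then show ?thesis
      using pullback_square_lift[OF M z hom_comp[OF z e1]] by blast
  qed
  ultimately show thesis
    using e1m e2m by (intro that[OF m]) auto
qed

lemma jointly_extremally_epicD:
  assumes "jointly_extremally_epic C a b" "mono C m" "hom C m M (Cod C a)"
    "hom C a' (Dom C a) M" "hom C b' (Dom C b) M" "Comp C m a' = a" "Comp C m b' = b"
  shows "iso C m"
proof -
  have "\<forall>m a' b'. mono C m \<and> Cod C m = Cod C a \<and>
      hom C a' (Dom C a) (Dom C m) \<and> hom C b' (Dom C b) (Dom C m) \<and>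
      Comp C m a' = a \<and> Comp C m b' = b \<longrightarrow> iso C m"
    using assms(1) unfolding jointly_extremally_epic_def by blast
  moreover have "mono C m \<and> Cod C m = Cod C a \<and>
      hom C a' (Dom C a) (Dom C m) \<and> hom C b' (Dom C b) (Dom C m) \<and>
      Comp C m a' = a \<and> Comp C m b' = b"
    using assms(2-) by (simp add: hom_def)
  ultimately show ?thesis
    by blast
qed

lemma jointly_extremally_epic_cancel:
  assumes fc: "finitely_complete C" and ab: "jointly_extremally_epic C a b"
    and e1: "hom C e1 X Y" and e2: "hom C e2 X Y" and X: "Cod C a = X"
    and ea: "Comp C e1 a = Comp C e2 a" and eb: "Comp C e1 b = Comp C e2 b"
  shows "e1 = e2"
proof -
  obtain M m where m: "hom C m M X" "mono C m" "Comp C e1 m = Comp C e2 m"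
    and factor: "\<forall>z V. hom C z V X \<and> Comp C e1 z = Comp C e2 z \<longrightarrow> (\<exists>u. hom C u V M \<and> Comp C m u = z)"
    by (rule equalizer_exists[OF fc e1 e2])
  have "a \<in> Arr C" "b \<in> Arr C" "Cod C b = X"
    using ab X unfolding jointly_extremally_epic_def by simp_all
  then have a: "hom C a (Dom C a) X" and b: "hom C b (Dom C b) X"
    using X by (simp_all add: hom_def)
  obtain a' b' where "hom C a' (Dom C a) M" "Comp C m a' = a" "hom C b' (Dom C b) M" "Comp C m b' = b"
    using factor a b ea eb by blast
  then have "iso C m"
    using jointly_extremally_epicD[OF ab m(2)] m(1) X by simp
  then obtain m' where m': "hom C m' X M" "Comp C m m' = Idt C X"
    by (rule isoE[OF _ m(1)])
  have "e1 = Comp C (Comp C e1 m) m'"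
    using Comp_assoc[OF m'(1) m(1) e1] m'(2) Comp_id_right[OF e1] by simp
  also have "\<dots> = e2"
    using Comp_assoc[OF m'(1) m(1) e2] m'(2) Comp_id_right[OF e2] m(3) by simp
  finally show ?thesis .
qed

lemma fibrational_pullback:
  assumes "fibrational C \<Sigma>" "(f, s) \<in> \<Sigma>" "pullback_square f g p q A B Z P"
    "hom C s' B P" "Comp C p s' = Comp C s g" "Comp C q s' = Idt C B"
  shows "(q, s') \<in> \<Sigma>"
proof -
  have "\<forall>f s g p q s'. (f, s) \<in> \<Sigma> \<and> is_pullback C f g p q \<and>
      hom C s' (Dom C g) (Dom C p) \<and> Comp C p s' = Comp C s g \<and> Comp C q s' = Idt C (Dom C g)
      \<longrightarrow> (q, s') \<in> \<Sigma>"
    using assms(1) unfolding fibrational_def by blast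
  moreover have "(f, s) \<in> \<Sigma> \<and> is_pullback C f g p q \<and>
      hom C s' (Dom C g) (Dom C p) \<and> Comp C p s' = Comp C s g \<and> Comp C q s' = Idt C (Dom C g)"
    using assms(2-) pullback_square_homs[OF assms(3)] by (simp add: pullback_square_def hom_def)
  ultimately show ?thesis
    by blast
qed

lemma sigma_maltsev_jointly_extremally_epic:
  assumes "sigma_maltsev C \<Sigma>" "(f, s) \<in> \<Sigma>" "split_epi C g t" "pullback_square g f p q Y' X Y P"
    and "hom C s' Y' P" "Comp C p s' = Idt C Y'" "Comp C q s' = Comp C s g"
    and "hom C tb X P" "Comp C p tb = Comp C t f" "Comp C q tb = Idt C X"
  shows "jointly_extremally_epic C s' tb"
proof -
  have "\<forall>f s g t p q s' tb. (f, s) \<in> \<Sigma> \<and> split_epi C g t \<and> Cod C g = Cod C f \<and>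
      is_pullback C g f p q \<and>
      hom C s' (Dom C g) (Dom C p) \<and> Comp C p s' = Idt C (Dom C g) \<and> Comp C q s' = Comp C s g \<and>
      hom C tb (Dom C f) (Dom C p) \<and> Comp C p tb = Comp C t f \<and> Comp C q tb = Idt C (Dom C f)
      \<longrightarrow> jointly_extremally_epic C s' tb"
    using assms(1) unfolding sigma_maltsev_def by blast
  moreover have "(f, s) \<in> \<Sigma> \<and> split_epi C g t \<and> Cod C g = Cod C f \<and>
      is_pullback C g f p q \<and>
      hom C s' (Dom C g) (Dom C p) \<and> Comp C p s' = Idt C (Dom C g) \<and> Comp C q s' = Comp C s g \<and>
      hom C tb (Dom C f) (Dom C p) \<and> Comp C p tb = Comp C t f \<and> Comp C q tb = Idt C (Dom C f)"
    using assms(2-) pullback_square_homs[OF assms(4)] by (simp add: pullback_square_def hom_def)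
  ultimately show ?thesis
    by blast
qed

lemma sigma_maltsev_sections:
  assumes malt: "sigma_maltsev C \<Sigma>" and "(f, s) \<in> \<Sigma>" and fs: "split_epi C f s"
    and gt: "split_epi C g t" and pb: "pullback_square g f p q Y' X Y P"
  obtains s' tb where "hom C s' Y' P" "Comp C p s' = Idt C Y'" "Comp C q s' = Comp C s g"
    "hom C tb X P" "Comp C p tb = Comp C t f" "Comp C q tb = Idt C X" "jointly_extremally_epic C s' tb"
proof -
  note homs = pullback_square_homs[OF pb]
  have s: "hom C s Y X" and fs1: "Comp C f s = Idt C Y" and t: "hom C t Y Y'" and gt1: "Comp C g t = Idt C Y"
    using fs gt homs by (simp_all add: split_epi_def hom_def)
  have Y': "Y' \<in> Obj C" and X: "X \<in> Obj C"
    using hom_objs(1)[OF homs(1)] hom_objs(1)[OF homs(2)] .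
  have "Comp C g (Idt C Y') = Comp C f (Comp C s g)"
    using homs s by (simp add: Comp_simps hom_def Comp_assoc_subst[OF fs1])
  then obtain s' where s': "hom C s' Y' P" "Comp C p s' = Idt C Y'" "Comp C q s' = Comp C s g"
    by (rule pullback_square_lift[OF pb hom_id[OF Y'] hom_comp[OF homs(1) s]])
  have "Comp C g (Comp C t f) = Comp C f (Idt C X)"
    using homs t by (simp add: Comp_simps hom_def Comp_assoc_subst[OF gt1])
  then obtain tb where tb: "hom C tb X P" "Comp C p tb = Comp C t f" "Comp C q tb = Idt C X"
    by (rule pullback_square_lift[OF pb hom_comp[OF homs(2) t] hom_id[OF X]])
  show thesis
    using sigma_maltsev_jointly_extremally_epic[OF malt \<open>(f, s) \<in> \<Sigma>\<close> gt pb s' tb] s' tb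
    by (intro that) auto
qed

lemma is_pullback_if_comparison_iso:
  assumes pb: "pullback_square f g p q A B Z P" and \<phi>: "hom C \<phi> X P" "iso C \<phi>"
  shows "is_pullback C f g (Comp C p \<phi>) (Comp C q \<phi>)"
proof -
  obtain \<psi> where \<psi>: "hom C \<psi> P X" "Comp C \<psi> \<phi> = Idt C X" "Comp C \<phi> \<psi> = Idt C P"
    using isoE[OF \<phi>(2,1)] by blast
  note homs = pullback_square_homs[OF pb] \<phi>(1) \<psi>(1)
  show ?thesis
  proof (rule is_pullbackI)
    show "hom C (Comp C p \<phi>) X A" "hom C (Comp C q \<phi>) X B"
      using homs by (blast intro: hom_comp)+
    show "Comp C f (Comp C p \<phi>) = Comp C g (Comp C q \<phi>)"
      using Comp_assoc[OF \<phi>(1) homs(3,1)] Comp_assoc[OF \<phi>(1) homs(4,2)] pullback_square_commutes[OF pb]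
      by simp
    fix x y W assume x: "hom C x W A" and y: "hom C y W B" and xy: "Comp C f x = Comp C g y"
    obtain v where v: "hom C v W P" "Comp C p v = x" "Comp C q v = y"
      using pullback_square_lift[OF pb x y xy] by blast
    show "\<exists>!u. hom C u W X \<and> Comp C (Comp C p \<phi>) u = x \<and> Comp C (Comp C q \<phi>) u = y"
    proof (rule ex1I)
      show "hom C (Comp C \<psi> v) W X \<and> Comp C (Comp C p \<phi>) (Comp C \<psi> v) = x
          \<and> Comp C (Comp C q \<phi>) (Comp C \<psi> v) = y"
        using homs v by (simp add: Comp_simps hom_def Comp_assoc_subst[OF \<psi>(3)])
      fix u assume "hom C u W X \<and> Comp C (Comp C p \<phi>) u = x \<and> Comp C (Comp C q \<phi>) u = y"
      then have u: "hom C u W X" "Comp C (Comp C p \<phi>) u = x" "Comp C (Comp C q \<phi>) u = y"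
        by blast+
      have "Comp C \<phi> u = v"
        by (rule pullback_square_unique[OF pb hom_comp[OF u(1) \<phi>(1)] v(1)])
          (use Comp_assoc[OF u(1) \<phi>(1) homs(3)] Comp_assoc[OF u(1) \<phi>(1) homs(4)] u v in simp_all)
      then show "u = Comp C \<psi> v"
        using Comp_assoc[OF u(1) \<phi>(1) \<psi>(1)] \<psi>(2) Comp_id_left[OF u(1)] by simp
    qed
  qed (use homs in \<open>simp_all\<close>)
qed

lemma Pt_simps [simp]:
  "Dom (Pt C) (S, T, ab) = S"
  "Cod (Pt C) (S, T, ab) = T"
  "Comp (Pt C) (T, U, (a', b')) (S, T', (a, b)) = (S, U, (Comp C a' a, Comp C b' b))"
  by (simp_all add: Pt_def)

lemma Arr_Pt_iff:
  "((h, r), (h', r'), (a, b)) \<in> Arr (Pt C) \<longleftrightarrow>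
     split_epi C h r \<and> split_epi C h' r' \<and> hom C a (Dom C h) (Dom C h') \<and> hom C b (Cod C h) (Cod C h') \<and>
     Comp C h' a = Comp C b h \<and> Comp C a r = Comp C r' b"
  by (simp add: Pt_def)

lemma hom_PtE:
  assumes "hom (Pt C) x S T"
  obtains a b where "x = (S, T, (a, b))"
  using assms by (cases x) (auto simp: hom_def)

context
  fixes g t f s \<phi> k1 k2 sK :: 'a and X Y P K :: 'o
  assumes g: "hom C g X Y" and t: "hom C t Y X" and gt: "Comp C g t = Idt C Y"
    and f: "hom C f P Y" and s: "hom C s Y P" and fs: "Comp C f s = Idt C Y"
    and \<phi>: "hom C \<phi> X P" and f\<phi>: "Comp C f \<phi> = g" and \<phi>t: "Comp C \<phi> t = s"
    and K: "pullback_square \<phi> \<phi> k1 k2 X X P K"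
    and sK: "hom C sK Y K" and k1sK: "Comp C k1 sK = t" and k2sK: "Comp C k2 sK = t"
begin

lemma kernel_pair_point:
  shows "hom C (Comp C g k1) K Y" and "Comp C g k2 = Comp C g k1" and "split_epi C (Comp C g k1) sK"
proof -
  have k1: "hom C k1 K X" and k2: "hom C k2 K X" and \<phi>k: "Comp C \<phi> k1 = Comp C \<phi> k2"
    using pullback_square_homs[OF K] pullback_square_commutes[OF K] by auto
  show "hom C (Comp C g k1) K Y"
    using k1 g by (rule hom_comp)
  show "Comp C g k2 = Comp C g k1"
    using Comp_assoc[OF k1 \<phi> f] Comp_assoc[OF k2 \<phi> f] f\<phi> \<phi>k by simp
  show "split_epi C (Comp C g k1) sK"
    using g k1 sK gt k1sK by (simp add: split_epi_def hom_def Comp_simps)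
qed

lemma kernel_pair_lift_section:
  assumes hr: "split_epi C h r" and xa: "hom C xa (Dom C h) X" and ya: "hom C ya (Dom C h) X"
    and xb: "hom C xb (Cod C h) Y" and xar: "Comp C xa r = Comp C t xb" and yar: "Comp C ya r = Comp C t xb"
    and \<phi>xy: "Comp C \<phi> xa = Comp C \<phi> ya"
  obtains ua where "hom C ua (Dom C h) K" "Comp C k1 ua = xa" "Comp C k2 ua = ya" "Comp C ua r = Comp C sK xb"
proof -
  have r: "hom C r (Cod C h) (Dom C h)"
    using hr by (auto simp: split_epi_def hom_def)
  obtain ua where ua: "hom C ua (Dom C h) K" "Comp C k1 ua = xa" "Comp C k2 ua = ya"
    using pullback_square_lift[OF K xa ya \<phi>xy] by blast
  note homs = t sK r xb pullback_square_homs[OF K]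
  have "Comp C ua r = Comp C sK xb"
  proof (rule pullback_square_unique[OF K hom_comp[OF r ua(1)] hom_comp[OF xb sK]])
    show "Comp C k1 (Comp C ua r) = Comp C k1 (Comp C sK xb)"
      using homs ua xar by (simp add: Comp_simps hom_def Comp_assoc_subst[OF ua(2)] Comp_assoc_subst[OF k1sK])
    show "Comp C k2 (Comp C ua r) = Comp C k2 (Comp C sK xb)"
      using homs ua yar by (simp add: Comp_simps hom_def Comp_assoc_subst[OF ua(3)] Comp_assoc_subst[OF k2sK])
  qed
  then show thesis
    using ua that by blast
qed

lemma Pt_kernel_pair_universal:
  assumes x: "hom (Pt C) x W (g, t)" and y: "hom (Pt C) y W (g, t)"
    and xy: "Comp (Pt C) ((g, t), (f, s), (\<phi>, Idt C Y)) x = Comp (Pt C) ((g, t), (f, s), (\<phi>, Idt C Y)) y"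
  shows "\<exists>!u. hom (Pt C) u W (Comp C g k1, sK) \<and> Comp (Pt C) ((Comp C g k1, sK), (g, t), (k1, Idt C Y)) u = x
    \<and> Comp (Pt C) ((Comp C g k1, sK), (g, t), (k2, Idt C Y)) u = y"
proof -
  define fK where "fK = Comp C g k1"
  have fK: "hom C fK K Y" and fKsK: "split_epi C fK sK"
    using kernel_pair_point unfolding fK_def by blast+
  obtain h r where W: "W = (h, r)"
    by (cases W)
  obtain xa xb ya yb where x_eq: "x = (W, (g, t), (xa, xb))" and y_eq: "y = (W, (g, t), (ya, yb))"
    using hom_PtE[OF x] hom_PtE[OF y] by metis
  have x': "split_epi C h r" "hom C xa (Dom C h) X" "hom C xb (Cod C h) Y"
    "Comp C g xa = Comp C xb h" "Comp C xa r = Comp C t xb"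
    using x g unfolding x_eq W by (simp_all add: Arr_Pt_iff hom_def)
  have y': "hom C ya (Dom C h) X" "hom C yb (Cod C h) Y" "Comp C ya r = Comp C t yb"
    using y g unfolding y_eq W by (simp_all add: Arr_Pt_iff hom_def)
  have \<phi>xy: "Comp C \<phi> xa = Comp C \<phi> ya" and xyb: "xb = yb"
    using xy Comp_id_left[OF x'(3)] Comp_id_left[OF y'(2)] unfolding x_eq y_eq by simp_all
  obtain ua where ua: "hom C ua (Dom C h) K" "Comp C k1 ua = xa" "Comp C k2 ua = ya" "Comp C ua r = Comp C sK xb"
    using kernel_pair_lift_section[OF x'(1,2) y'(1) x'(3,5) y'(3)[folded xyb] \<phi>xy] by blast
  have "Comp C fK ua = Comp C xb h"
    using g ua x' pullback_square_homs[OF K] by (simp add: fK_def Comp_simps hom_def)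
  then have u: "hom (Pt C) (W, (fK, sK), (ua, xb)) W (fK, sK)"
    using x' fKsK fK ua unfolding W by (simp add: Arr_Pt_iff hom_def)
  show ?thesis
    unfolding fK_def[symmetric]
  proof (rule ex1I[of _ "(W, (fK, sK), (ua, xb))"])
    show "hom (Pt C) (W, (fK, sK), (ua, xb)) W (fK, sK)
        \<and> Comp (Pt C) ((fK, sK), (g, t), (k1, Idt C Y)) (W, (fK, sK), (ua, xb)) = x
        \<and> Comp (Pt C) ((fK, sK), (g, t), (k2, Idt C Y)) (W, (fK, sK), (ua, xb)) = y"
      using u ua xyb Comp_id_left[OF x'(3)] unfolding x_eq y_eq by simp
  next
    fix u'
    assume u': "hom (Pt C) u' W (fK, sK) \<and> Comp (Pt C) ((fK, sK), (g, t), (k1, Idt C Y)) u' = x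
        \<and> Comp (Pt C) ((fK, sK), (g, t), (k2, Idt C Y)) u' = y"
    then obtain ua' ub' where u'_eq: "u' = (W, (fK, sK), (ua', ub'))"
      using hom_PtE by blast
    have ua': "hom C ua' (Dom C h) K" and ub': "hom C ub' (Cod C h) Y"
      using u' fK unfolding u'_eq W by (simp_all add: Arr_Pt_iff hom_def)
    have "Comp C k1 ua' = xa" "Comp C k2 ua' = ya" "ub' = xb"
      using u' Comp_id_left[OF ub'] unfolding u'_eq x_eq y_eq by simp_all
    then show "u' = (W, (fK, sK), (ua, xb))"
      using pullback_square_unique[OF K ua' ua(1)] ua unfolding u'_eq by simp
  qed
qed

lemma Pt_kernel_pair_pullback:
  "is_pullback (Pt C) ((g, t), (f, s), (\<phi>, Idt C Y)) ((g, t), (f, s), (\<phi>, Idt C Y))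
    ((Comp C g k1, sK), (g, t), (k1, Idt C Y)) ((Comp C g k1, sK), (g, t), (k2, Idt C Y))"
proof -
  have k1: "hom C k1 K X" and k2: "hom C k2 K X" and \<phi>k: "Comp C \<phi> k1 = Comp C \<phi> k2"
    using pullback_square_homs[OF K] pullback_square_commutes[OF K] by auto
  have Y: "Y \<in> Obj C"
    using hom_objs(2)[OF g] .
  note homs = g t f s \<phi> k1 k2 sK hom_id[OF Y] kernel_pair_point
  have gt': "split_epi C g t" and fs': "split_epi C f s"
    using homs gt fs by (simp_all add: split_epi_def hom_def)
  have \<alpha>: "hom (Pt C) ((g, t), (f, s), (\<phi>, Idt C Y)) (g, t) (f, s)"
    using homs gt' fs' f\<phi> \<phi>t by (simp add: Arr_Pt_iff Comp_simps hom_def)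
  show ?thesis
  proof (rule is_pullbackI[OF \<alpha> \<alpha>])
    show "hom (Pt C) ((Comp C g k1, sK), (g, t), (k1, Idt C Y)) (Comp C g k1, sK) (g, t)"
      using homs gt' k1sK by (simp add: Arr_Pt_iff Comp_simps hom_def)
    show "hom (Pt C) ((Comp C g k1, sK), (g, t), (k2, Idt C Y)) (Comp C g k1, sK) (g, t)"
      using homs gt' k2sK by (simp add: Arr_Pt_iff Comp_simps hom_def)
    show "Comp (Pt C) ((g, t), (f, s), (\<phi>, Idt C Y)) ((Comp C g k1, sK), (g, t), (k1, Idt C Y)) =
        Comp (Pt C) ((g, t), (f, s), (\<phi>, Idt C Y)) ((Comp C g k1, sK), (g, t), (k2, Idt C Y))"
      using \<phi>k by simp
  qed (rule Pt_kernel_pair_universal)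
qed

lemma kernel_pair_point_in_Sigma:
  assumes pc: "point_congruous C \<Sigma>" and "(g, t) \<in> \<Sigma>" and "(f, s) \<in> \<Sigma>"
  shows "(Comp C g k1, sK) \<in> \<Sigma>"
proof -
  have "\<forall>\<alpha> \<beta> \<pi> \<rho>. is_pullback (Pt C) \<alpha> \<beta> \<pi> \<rho> \<and>
      Dom (Pt C) \<alpha> \<in> \<Sigma> \<and> Dom (Pt C) \<beta> \<in> \<Sigma> \<and> Cod (Pt C) \<alpha> \<in> \<Sigma> \<longrightarrow> Dom (Pt C) \<pi> \<in> \<Sigma>"
    using pc unfolding point_congruous_def by blast
  from this[rule_format, OF conjI[OF Pt_kernel_pair_pullback]] show ?thesis
    using assms(2,3) by simp
qed

end

context
  fixes \<Sigma> :: "('a \<times> 'a) set"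
    and d0 d1 s0 d0' d1' s0' g1 t1 g0 t0 :: 'a and X1 X0 X1' X0' :: 'o
  assumes fc: "finitely_complete C" and pc: "point_congruous C \<Sigma>" and malt: "sigma_maltsev C \<Sigma>"
    and G: "reflexive_graph C d0 d1 s0 X1 X0" and G': "reflexive_graph C d0' d1' s0' X1' X0'"
    and g1: "hom C g1 X1 X1'" and t1: "hom C t1 X1' X1" and g1t1: "Comp C g1 t1 = Idt C X1'"
    and g0: "hom C g0 X0 X0'" and t0: "hom C t0 X0' X0"
    and c_d0: "Comp C d0' g1 = Comp C g0 d0" and c_s0: "Comp C g1 s0 = Comp C s0' g0"
    and ct_d0: "Comp C d0 t1 = Comp C t0 d0'" and ct_d1: "Comp C d1 t1 = Comp C t0 d1'"
    and sig: "(g0, t0) \<in> \<Sigma>"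
    and pb0: "pullback_square g0 d0' d0 g1 X0 X1' X0' X1"
begin

text \<open>Elementwise, W consists of pairs (a, b) with d0' a = d0' b, and X3 of pairs ((a, b), \<kappa>) with
  fK \<kappa> = a. Given k with g1 k = fK, the transport of k is the unique \<theta> with d0 \<theta> = d0 (k \<kappa>) and
  g1 \<theta> = b, which exists because the d0-square is a pullback.\<close>

lemma d0_transport_exists:
  assumes W: "pullback_square d0' d0' w1 w2 X1' X1' X0' W"
    and X3: "pullback_square w1 fK p3 q3 W K X1' X3"
    and k: "hom C k K X1" "Comp C g1 k = fK"
  obtains \<theta> where "hom C \<theta> X3 X1" "Comp C d0 \<theta> = Comp C d0 (Comp C k q3)" "Comp C g1 \<theta> = Comp C w2 p3"
proof -
  have d0: "hom C d0 X1 X0" and d0': "hom C d0' X1' X0'"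
    using G G' by (auto simp: reflexive_graph_def)
  have w: "hom C w1 W X1'" "hom C w2 W X1'" and d0'w: "Comp C d0' w1 = Comp C d0' w2"
    using pullback_square_homs[OF W] pullback_square_commutes[OF W] by auto
  have p3: "hom C p3 X3 W" and q3: "hom C q3 X3 K" and w1p3: "Comp C w1 p3 = Comp C fK q3"
    using pullback_square_homs[OF X3] pullback_square_commutes[OF X3] by auto
  note homs = d0 d0' g1 g0 w p3 q3
  have "Comp C g0 (Comp C d0 (Comp C k q3)) = Comp C d0' (Comp C g1 (Comp C k q3))"
    using homs k by (simp add: Comp_simps hom_def Comp_assoc_subst[OF c_d0[symmetric]])
  also have "\<dots> = Comp C d0' (Comp C w1 p3)"
    using homs k w1p3 by (simp add: Comp_simps hom_def Comp_assoc_subst[OF k(2)])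
  also have "\<dots> = Comp C d0' (Comp C w2 p3)"
    using homs by (simp add: Comp_simps hom_def Comp_assoc_subst[OF d0'w])
  finally show thesis
    by (rule pullback_square_lift[OF pb0 hom_comp[OF hom_comp[OF q3 k(1)] d0] hom_comp[OF p3 w(2)]])
      (rule that)
qed

lemma d1_transports_eq:
  assumes \<Sigma>K: "(fK, sK) \<in> \<Sigma>" and fKsK: "split_epi C fK sK"
    and W: "pullback_square d0' d0' w1 w2 X1' X1' X0' W"
    and X3: "pullback_square w1 fK p3 q3 W K X1' X3"
    and k1: "hom C k1 K X1" "Comp C g1 k1 = fK" and k2: "hom C k2 K X1" "Comp C g1 k2 = fK"
    and d1k: "Comp C d1 k1 = Comp C d1 k2" and ksK: "Comp C k1 sK = Comp C k2 sK"
    and \<theta>1: "hom C \<theta>1 X3 X1" "Comp C d0 \<theta>1 = Comp C d0 (Comp C k1 q3)" "Comp C g1 \<theta>1 = Comp C w2 p3"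
    and \<theta>2: "hom C \<theta>2 X3 X1" "Comp C d0 \<theta>2 = Comp C d0 (Comp C k2 q3)" "Comp C g1 \<theta>2 = Comp C w2 p3"
  shows "Comp C d1 \<theta>1 = Comp C d1 \<theta>2"
proof -
  have d0: "hom C d0 X1 X0" and d1: "hom C d1 X1 X0"
    using G by (auto simp: reflexive_graph_def)
  obtain \<delta> where \<delta>: "hom C \<delta> X1' W" "Comp C w1 \<delta> = Idt C X1'" "Comp C w2 \<delta> = Idt C X1'"
    using kernel_pair_diagonal[OF W] by blast
  have "split_epi C w1 \<delta>"
    using pullback_square_homs[OF W] \<delta> by (simp add: split_epi_def hom_def)
  then obtain s3 tb3 where s3: "hom C s3 W X3" "Comp C p3 s3 = Idt C W" "Comp C q3 s3 = Comp C sK w1"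
    and tb3: "hom C tb3 K X3" "Comp C p3 tb3 = Comp C \<delta> fK" "Comp C q3 tb3 = Idt C K"
    and JE: "jointly_extremally_epic C s3 tb3"
    using sigma_maltsev_sections[OF malt \<Sigma>K fKsK _ X3] by metis
  note homs = d0 d1 g1 k1(1) k2(1) \<delta>(1) s3(1) tb3(1) \<theta>1(1) \<theta>2(1)
    pullback_square_homs[OF W] pullback_square_homs[OF X3]
  have sK: "hom C sK X1' K"
    using fKsK pullback_square_homs(2)[OF X3] by (simp add: split_epi_def hom_def)
  have \<theta>s3: "Comp C \<theta>1 s3 = Comp C \<theta>2 s3"
  proof (rule pullback_square_unique[OF pb0 hom_comp[OF s3(1) \<theta>1(1)] hom_comp[OF s3(1) \<theta>2(1)]])
    show "Comp C d0 (Comp C \<theta>1 s3) = Comp C d0 (Comp C \<theta>2 s3)"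
      using homs sK s3 ksK by (simp add: Comp_simps hom_def Comp_assoc_subst[OF \<theta>1(2)]
          Comp_assoc_subst[OF \<theta>2(2)] Comp_assoc_subst[OF s3(3)] Comp_assoc_subst[OF ksK])
    show "Comp C g1 (Comp C \<theta>1 s3) = Comp C g1 (Comp C \<theta>2 s3)"
      using homs by (simp add: Comp_simps hom_def Comp_assoc_subst[OF \<theta>1(3)] Comp_assoc_subst[OF \<theta>2(3)])
  qed
  have \<theta>_tb3: "Comp C \<theta> tb3 = k"
    if \<theta>: "hom C \<theta> X3 X1" "Comp C d0 \<theta> = Comp C d0 (Comp C k q3)" "Comp C g1 \<theta> = Comp C w2 p3"
      and k: "hom C k K X1" "Comp C g1 k = fK" for \<theta> k
  proof (rule pullback_square_unique[OF pb0 hom_comp[OF tb3(1) \<theta>(1)] k(1)])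
    show "Comp C d0 (Comp C \<theta> tb3) = Comp C d0 k"
      using homs \<theta> k tb3 by (simp add: Comp_simps hom_def Comp_assoc_subst[OF \<theta>(2)])
    show "Comp C g1 (Comp C \<theta> tb3) = Comp C g1 k"
      using homs \<theta> k tb3 by (simp add: Comp_simps hom_def Comp_assoc_subst[OF \<theta>(3)] Comp_assoc_subst[OF \<delta>(3)])
  qed
  show ?thesis
    by (rule jointly_extremally_epic_cancel[OF fc JE hom_comp[OF \<theta>1(1) d1] hom_comp[OF \<theta>2(1) d1]])
      (use homs d1k \<theta>s3 \<theta>_tb3[OF \<theta>1 k1] \<theta>_tb3[OF \<theta>2 k2] in \<open>simp_all add: Comp_simps hom_def\<close>)
qed

lemma d0_eq_if_d1_eq:
  assumes k1: "hom C k1 K X1" and k2: "hom C k2 K X1"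
    and g1k: "Comp C g1 k1 = Comp C g1 k2" and d1k: "Comp C d1 k1 = Comp C d1 k2"
    and \<Sigma>K: "(Comp C g1 k1, sK) \<in> \<Sigma>" and fKsK: "split_epi C (Comp C g1 k1) sK"
    and ksK: "Comp C k1 sK = Comp C k2 sK"
  shows "Comp C d0 k1 = Comp C d0 k2"
proof -
  define fK where "fK = Comp C g1 k1"
  have d0: "hom C d0 X1 X0" and d1: "hom C d1 X1 X0" and s0: "hom C s0 X0 X1"
    and d0s0: "Comp C d0 s0 = Idt C X0" and d1s0: "Comp C d1 s0 = Idt C X0"
    and d0': "hom C d0' X1' X0'" and s0': "hom C s0' X0' X1'" and d0s0': "Comp C d0' s0' = Idt C X0'"
    using G G' by (auto simp: reflexive_graph_def)
  have fK: "hom C fK K X1'" and K: "K \<in> Obj C"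
    unfolding fK_def using hom_comp[OF k1 g1] hom_objs(1)[OF k1] .
  have k1': "Comp C g1 k1 = fK" and k2': "Comp C g1 k2 = fK"
    using g1k by (simp_all add: fK_def)
  obtain W w1 w2 where W: "pullback_square d0' d0' w1 w2 X1' X1' X0' W"
    using pullback_square_exists[OF fc d0' d0'] .
  obtain X3 p3 q3 where X3: "pullback_square w1 fK p3 q3 W K X1' X3"
    using pullback_square_exists[OF fc pullback_square_homs(3)[OF W] fK] .
  obtain \<theta>1 where \<theta>1: "hom C \<theta>1 X3 X1" "Comp C d0 \<theta>1 = Comp C d0 (Comp C k1 q3)" "Comp C g1 \<theta>1 = Comp C w2 p3"
    using d0_transport_exists[OF W X3 k1 k1'] .
  obtain \<theta>2 where \<theta>2: "hom C \<theta>2 X3 X1" "Comp C d0 \<theta>2 = Comp C d0 (Comp C k2 q3)" "Comp C g1 \<theta>2 = Comp C w2 p3"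
    using d0_transport_exists[OF W X3 k2 k2'] .
  have d1\<theta>: "Comp C d1 \<theta>1 = Comp C d1 \<theta>2"
    using d1_transports_eq[OF \<Sigma>K[folded fK_def] fKsK[folded fK_def] W X3 k1 k1' k2 k2' d1k ksK \<theta>1 \<theta>2] .
  note homs = d0 d1 s0 d0' s0' g1 g0 k1 k2 fK \<theta>1(1) \<theta>2(1)
    pullback_square_homs[OF W] pullback_square_homs[OF X3]
  have "Comp C d0' fK = Comp C d0' (Comp C s0' (Comp C d0' fK))"
    using homs by (simp add: Comp_simps hom_def Comp_assoc_subst[OF d0s0'])
  then obtain z where z: "hom C z K W" "Comp C w1 z = fK" "Comp C w2 z = Comp C s0' (Comp C d0' fK)"
    by (rule pullback_square_lift[OF W fK hom_comp[OF hom_comp[OF fK d0'] s0']])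
  have "Comp C w1 z = Comp C fK (Idt C K)"
    using homs z by (simp add: Comp_simps hom_def)
  \<comment> \<open>\<zeta> sends \<kappa> to ((fK \<kappa>, s0' d0' fK \<kappa>), \<kappa>), where the transport of k becomes s0 d0 k.\<close>
  then obtain \<zeta> where \<zeta>: "hom C \<zeta> K X3" "Comp C p3 \<zeta> = z" "Comp C q3 \<zeta> = Idt C K"
    by (rule pullback_square_lift[OF X3 z(1) hom_id[OF K]])
  have \<theta>_\<zeta>: "Comp C \<theta> \<zeta> = Comp C s0 (Comp C d0 k)"
    if \<theta>: "hom C \<theta> X3 X1" "Comp C d0 \<theta> = Comp C d0 (Comp C k q3)" "Comp C g1 \<theta> = Comp C w2 p3"
      and k: "hom C k K X1" "Comp C g1 k = fK" for \<theta> k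
  proof (rule pullback_square_unique[OF pb0 hom_comp[OF \<zeta>(1) \<theta>(1)] hom_comp[OF hom_comp[OF k(1) d0] s0]])
    show "Comp C d0 (Comp C \<theta> \<zeta>) = Comp C d0 (Comp C s0 (Comp C d0 k))"
      using homs \<theta> k \<zeta> by (simp add: Comp_simps hom_def Comp_assoc_subst[OF \<theta>(2)] Comp_assoc_subst[OF d0s0])
    have "Comp C g1 (Comp C s0 (Comp C d0 k)) = Comp C s0' (Comp C d0' fK)"
      using homs k(1) by (simp add: Comp_simps hom_def Comp_assoc_subst[OF c_s0] Comp_assoc_subst[OF c_d0]
          flip: k(2))
    then show "Comp C g1 (Comp C \<theta> \<zeta>) = Comp C g1 (Comp C s0 (Comp C d0 k))"
      using homs \<theta> \<zeta> z by (simp add: Comp_simps hom_def Comp_assoc_subst[OF \<theta>(3)])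
  qed
  have "Comp C d0 k1 = Comp C d1 (Comp C \<theta>1 \<zeta>)"
    using homs \<theta>_\<zeta>[OF \<theta>1 k1 k1'] by (simp add: Comp_simps hom_def Comp_assoc_subst[OF d1s0])
  also have "\<dots> = Comp C d1 (Comp C \<theta>2 \<zeta>)"
    using Comp_assoc[OF \<zeta>(1) \<theta>1(1) d1] Comp_assoc[OF \<zeta>(1) \<theta>2(1) d1] d1\<theta> by simp
  also have "\<dots> = Comp C d0 k2"
    using homs \<theta>_\<zeta>[OF \<theta>2 k2 k2'] by (simp add: Comp_simps hom_def Comp_assoc_subst[OF d1s0])
  finally show ?thesis .
qed

lemma comparison_mono:
  assumes P: "pullback_square g0 d1' \<pi>2 \<pi>1 X0 X1' X0' P"
    and \<phi>: "hom C \<phi> X1 P" and \<pi>2\<phi>: "Comp C \<pi>2 \<phi> = d1" and \<pi>1\<phi>: "Comp C \<pi>1 \<phi> = g1"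
  shows "mono C \<phi>"
proof -
  have d1: "hom C d1 X1 X0"
    using G by (auto simp: reflexive_graph_def)
  have \<pi>1: "hom C \<pi>1 P X1'" and \<pi>2: "hom C \<pi>2 P X0"
    using pullback_square_homs[OF P] by auto
  note homs = d1 g1 t1 t0 \<pi>1 \<pi>2 \<phi> pullback_square_homs[OF P]
  have fib: "fibrational C \<Sigma>"
    using pc by (simp add: point_congruous_def)
  have \<phi>t1: "hom C (Comp C \<phi> t1) X1' P" and \<pi>1\<phi>t1: "Comp C \<pi>1 (Comp C \<phi> t1) = Idt C X1'"
    using homs g1t1 by (simp_all add: Comp_simps hom_def Comp_assoc_subst[OF \<pi>1\<phi>])
  have "Comp C \<pi>2 (Comp C \<phi> t1) = Comp C t0 d1'"
    using homs ct_d1 by (simp add: Comp_simps hom_def Comp_assoc_subst[OF \<pi>2\<phi>])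
  then have \<Sigma>P: "(\<pi>1, Comp C \<phi> t1) \<in> \<Sigma>"
    using fibrational_pullback[OF fib sig P \<phi>t1 _ \<pi>1\<phi>t1] by blast
  have \<Sigma>1: "(g1, t1) \<in> \<Sigma>"
    using fibrational_pullback[OF fib sig pb0 t1 ct_d0 g1t1] .
  obtain K k1 k2 where K: "pullback_square \<phi> \<phi> k1 k2 X1 X1 P K"
    using pullback_square_exists[OF fc \<phi> \<phi>] .
  have k1: "hom C k1 K X1" and k2: "hom C k2 K X1" and \<phi>k: "Comp C \<phi> k1 = Comp C \<phi> k2"
    using pullback_square_homs[OF K] pullback_square_commutes[OF K] by auto
  obtain sK where sK: "hom C sK X1' K" "Comp C k1 sK = t1" "Comp C k2 sK = t1"
    using pullback_square_lift[OF K t1 t1 refl] by blast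
  note point = \<pi>1 \<phi>t1 \<pi>1\<phi>t1 \<phi> \<pi>1\<phi> refl K sK
  have g1k: "Comp C g1 k1 = Comp C g1 k2" and d1k: "Comp C d1 k1 = Comp C d1 k2"
    using Comp_assoc[OF k1 \<phi> \<pi>1] Comp_assoc[OF k2 \<phi> \<pi>1] Comp_assoc[OF k1 \<phi> \<pi>2] Comp_assoc[OF k2 \<phi> \<pi>2]
      \<phi>k \<pi>1\<phi> \<pi>2\<phi> by simp_all
  have "Comp C d0 k1 = Comp C d0 k2"
    using d0_eq_if_d1_eq[OF k1 k2 g1k d1k kernel_pair_point_in_Sigma[OF g1 t1 g1t1 point pc \<Sigma>1 \<Sigma>P]
        kernel_pair_point(3)[OF g1 t1 g1t1 point]] sK by simp
  then have "k1 = k2"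
    using pullback_square_unique[OF pb0 k1 k2] g1k by simp
  then show ?thesis
    by (rule mono_if_kernel_pair_projections_eq[OF K])
qed

lemma comparison_sections_jointly_extremally_epic:
  assumes P: "pullback_square g0 d1' \<pi>2 \<pi>1 X0 X1' X0' P"
    and \<phi>: "hom C \<phi> X1 P" and \<pi>2\<phi>: "Comp C \<pi>2 \<phi> = d1" and \<pi>1\<phi>: "Comp C \<pi>1 \<phi> = g1"
  shows "jointly_extremally_epic C (Comp C \<phi> t1) (Comp C \<phi> s0)"
proof (rule sigma_maltsev_jointly_extremally_epic[OF malt sig _ pullback_square_sym[OF P]])
  have d1: "hom C d1 X1 X0" and s0: "hom C s0 X0 X1" and d1s0: "Comp C d1 s0 = Idt C X0"
    and d1': "hom C d1' X1' X0'" and s0': "hom C s0' X0' X1'" and d1s0': "Comp C d1' s0' = Idt C X0'"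
    using G G' by (auto simp: reflexive_graph_def)
  note homs = d1 s0 d1' s0' g1 t1 t0 \<phi> pullback_square_homs[OF P]
  show "split_epi C d1' s0'"
    using homs d1s0' by (simp add: split_epi_def hom_def)
  show "hom C (Comp C \<phi> t1) X1' P" "hom C (Comp C \<phi> s0) X0 P"
    using homs by (blast intro: hom_comp)+
  show "Comp C \<pi>1 (Comp C \<phi> t1) = Idt C X1'" "Comp C \<pi>2 (Comp C \<phi> t1) = Comp C t0 d1'"
    "Comp C \<pi>1 (Comp C \<phi> s0) = Comp C s0' g0" "Comp C \<pi>2 (Comp C \<phi> s0) = Idt C X0"
    using homs g1t1 ct_d1 c_s0 d1s0
    by (simp_all add: Comp_simps hom_def Comp_assoc_subst[OF \<pi>1\<phi>] Comp_assoc_subst[OF \<pi>2\<phi>])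
qed

lemma comparison_iso:
  assumes P: "pullback_square g0 d1' \<pi>2 \<pi>1 X0 X1' X0' P"
    and \<phi>: "hom C \<phi> X1 P" and \<pi>2\<phi>: "Comp C \<pi>2 \<phi> = d1" and \<pi>1\<phi>: "Comp C \<pi>1 \<phi> = g1"
  shows "iso C \<phi>"
proof -
  have s0: "hom C s0 X0 X1"
    using G by (simp add: reflexive_graph_def)
  show ?thesis
    using jointly_extremally_epicD[OF comparison_sections_jointly_extremally_epic[OF assms]
        comparison_mono[OF assms]] \<phi> t1 s0
    by (simp add: Comp_simps hom_def)
qed

end

end

theorem proposition6p1:
  fixes E :: "('o, 'a, 'm) category_scheme"
    and \<Sigma> :: "('a \<times> 'a) set"
    and d0 d1 s0 d0' d1' s0' g1 t1 g0 t0 :: 'a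
    and X1 X0 X1' X0' :: 'o
  assumes cat: "is_category E"
    and fc: "finitely_complete E"
    and pc: "point_congruous E \<Sigma>"
    and malt: "sigma_maltsev E \<Sigma>"
    and G: "reflexive_graph E d0 d1 s0 X1 X0"
    and G': "reflexive_graph E d0' d1' s0' X1' X0'"
    and g1: "hom E g1 X1 X1'" and t1: "hom E t1 X1' X1"
    and g0: "hom E g0 X0 X0'" and t0: "hom E t0 X0' X0"
    and se1: "split_epi E g1 t1" and se0: "split_epi E g0 t0"
    and c_d0: "Comp E d0' g1 = Comp E g0 d0" and c_d1: "Comp E d1' g1 = Comp E g0 d1"
    and c_s0: "Comp E g1 s0 = Comp E s0' g0"
    and ct_d0: "Comp E d0 t1 = Comp E t0 d0'" and ct_d1: "Comp E d1 t1 = Comp E t0 d1'"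
    and ct_s0: "Comp E t1 s0' = Comp E s0 t0"
    and sig: "(g0, t0) \<in> \<Sigma>"
    and pb0: "is_pullback E g0 d0' d0 g1"
  shows "is_pullback E g0 d1' d1 g1"
proof -
  interpret cat E
    by (rule cat.intro) (rule cat)
  have d0: "hom E d0 X1 X0" and d1: "hom E d1 X1 X0" and d0': "hom E d0' X1' X0'"
    and d1': "hom E d1' X1' X0'"
    using G G' by (auto simp: reflexive_graph_def)
  have g1t1: "Comp E g1 t1 = Idt E X1'"
    using se1 g1 by (simp add: split_epi_def hom_def)
  have PB0: "pullback_square g0 d0' d0 g1 X0 X1' X0' X1"
    using pullback_squareI[OF pb0 g0 d0'] d0 by (simp add: hom_def)
  obtain P \<pi>2 \<pi>1 where P: "pullback_square g0 d1' \<pi>2 \<pi>1 X0 X1' X0' P"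
    using pullback_square_exists[OF fc g0 d1'] .
  obtain \<phi> where \<phi>: "hom E \<phi> X1 P" "Comp E \<pi>2 \<phi> = d1" "Comp E \<pi>1 \<phi> = g1"
    using pullback_square_lift[OF P d1 g1 c_d1[symmetric]] by blast
  have "iso E \<phi>"
    using comparison_iso[OF fc pc malt G G' g1 t1 g1t1 g0 t0 c_d0 c_s0 ct_d0 ct_d1 sig PB0 P \<phi>] .
  then show ?thesis
    using is_pullback_if_comparison_iso[OF P \<phi>(1)] \<phi> by simp
qed

end
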